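(* Let $P\ge 2$ and let $X=WH$ with $W=(w_{mp})\in\mathbb{H}_{\mathcal S}^{M\times P}$ and $H=(h_{pn})\in\mathbb{R}_+^{P\times N}$, such that $\mathrm{Re}\,w_{mp}>0$ for all $m,p$. If the QNMF $X=WH$ is essentially unique, then: (A1) for every pair $(p,q)$ with $p\neq q$ there exists $m$ such that $\Phi_{mp}=1$ and $\Phi_{mq}\boldsymbol\mu_{mq}\neq\boldsymbol\mu_{mp}$; (A2) for every pair $(p,q)$ with $p\neq q$ there exists $n$ such that $h_{pn}=0$ and $h_{qn}>0$.
   Context: $\mathbb{H}$ denotes the quaternions; for $q=a+b\mathbf i+c\mathbf j+d\mathbf k$, $\mathrm{Re}\,q=a$, $\mathrm{Im}\,q=b\mathbf i+c\mathbf j+d\mathbf k$, $|\mathrm{Im}\,q|^2=b^2+c^2+d^2$. $\mathbb{H}_{\mathcal S}=\{q\in\mathbb{H}: \mathrm{Re}\,q\ge 0,\ |\mathrm{Im}\,q|^2\le(\mathrm{Re}\,q)^2\}$; $\mathbb{R}_+=[0,\infty)$. Polar parametrization: every $w\in\mathbb{H}_{\mathcal S}$ with $\mathrm{Re}\,w>0$ is written $w=I+I\Phi\boldsymbol\mu$ with intensity $I=\mathrm{Re}\,w>0$, degree of polarization $\Phi=|\mathrm{Im}\,w|/\mathrm{Re}\,w\in[0,1]$, and polarization axis $\boldsymbol\mu$ a pure unit quaternion, with $\boldsymbol\mu=\mathrm{Im}\,w/|\mathrm{Im}\,w|$ when $\mathrm{Im}\,w\ne0$ (arbitrary otherwise).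 For the entries of $W$ we write $w_{mp}=I_{mp}+I_{mp}\Phi_{mp}\boldsymbol\mu_{mp}$. The QNMF $X=WH$ is essentially unique if for every $\tilde W\in\mathbb{H}_{\mathcal S}^{M\times P}$, $\tilde H\in\mathbb{R}_+^{P\times N}$ with $X=\tilde W\tilde H$ there exist a diagonal matrix $D$ with strictly positive diagonal entries and a permutation matrix $\Pi$ such that $\tilde W=WD\Pi$ and $\tilde H=(D\Pi)^{-1}H$. *)

theory Defs
  imports "HOL-Analysis.Analysis"
begin

text \<open>Quaternions q = a + b i + c j + d k are represented as pairs (a, (b,c,d)) of the real
part and the imaginary part, the latter viewed as a vector of real^3 (a pure quaternion).
Only the real vector space structure of the quaternions is needed here (H is real).\<close>

type_synonym quat = "real \<times> (real^3)"

definition qRe :: "quat \<Rightarrow> real" where "qRe q = fst q"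
definition qIm :: "quat \<Rightarrow> real^3" where "qIm q = snd q"

definition HS :: "quat set" where
  "HS = {q. qRe q \<ge> 0 \<and> (norm (qIm q))\<^sup>2 \<le> (qRe q)\<^sup>2}"

text \<open>The axis is Im w / |Im w| when Im w is nonzero (sgn gives 0 otherwise; the axis is
arbitrary in that case and only enters multiplied by Phi = 0).\<close>
definition intensity :: "quat \<Rightarrow> real" where "intensity w = qRe w"
definition Phi :: "quat \<Rightarrow> real" where "Phi w = norm (qIm w) / qRe w"
definition mu :: "quat \<Rightarrow> real^3" where "mu w = sgn (qIm w)"

definition qmatmul :: "('m \<Rightarrow> 'p::finite \<Rightarrow> quat) \<Rightarrow> ('p \<Rightarrow> 'n \<Rightarrow> real) \<Rightarrow> 'm \<Rightarrow> 'n \<Rightarrow> quat" where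
  "qmatmul W H m n = (\<Sum>p\<in>UNIV. H p n *\<^sub>R W m p)"

text \<open>Essential uniqueness: W~ = W D Pi and H~ = (D Pi)^-1 H, with D positive diagonal and
Pi the permutation matrix with Pi(p,j) = 1 iff p = tau j; written out entrywise.\<close>
definition essentially_unique :: "('m \<Rightarrow> 'p::finite \<Rightarrow> quat) \<Rightarrow> ('p \<Rightarrow> 'n \<Rightarrow> real) \<Rightarrow> bool" where
  "essentially_unique W H \<longleftrightarrow>
     (\<forall>W' H'. (\<forall>m p. W' m p \<in> HS) \<longrightarrow> (\<forall>p n. H' p n \<ge> 0) \<longrightarrow>
        qmatmul W' H' = qmatmul W H \<longrightarrow>
        (\<exists>d :: 'p \<Rightarrow> real. \<exists>\<tau> :: 'p \<Rightarrow> 'p. (\<forall>p. d p > 0) \<and> bij \<tau> \<and>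
           (\<forall>m j. W' m j = d (\<tau> j) *\<^sub>R W m (\<tau> j)) \<and>
           (\<forall>j n. H' j n = H (\<tau> j) n / d (\<tau> j))))"

end

theory Submission
  imports Defs
begin

text \<open>Suppose (A1) or (A2) fails for a pair p \<noteq> q. Then the factorization can be sheared:
replace column p of W by W_p - e W_q and row q of H by H_q + e H_p (for A1), or column q of W
by W_q + e W_p and row p of H by H_p - e H_q (for A2). The product is unchanged, and the failure
of the condition is exactly what keeps the new factors in H_S and R_+ for all small e > 0.
Essential uniqueness then forces every sheared rank-one term to be one of the finitely many
rank-one terms of W H, while distinct e give distinct terms.\<close>

lemma qRe_add [simp]: "qRe (x + y) = qRe x + qRe y" by (simp add: qRe_def)
lemma qIm_add [simp]: "qIm (x + y) = qIm x + qIm y" by (simp add: qIm_def)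
lemma qRe_diff [simp]: "qRe (x - y) = qRe x - qRe y" by (simp add: qRe_def)
lemma qIm_diff [simp]: "qIm (x - y) = qIm x - qIm y" by (simp add: qIm_def)
lemma qRe_scaleR [simp]: "qRe (a *\<^sub>R x) = a * qRe x" by (simp add: qRe_def)
lemma qIm_scaleR [simp]: "qIm (a *\<^sub>R x) = a *\<^sub>R qIm x" by (simp add: qIm_def)

lemma quat_eq_iff: "x = y \<longleftrightarrow> qRe x = qRe y \<and> qIm x = qIm y"
  by (simp add: qRe_def qIm_def prod_eq_iff)

lemma HS_iff: "x \<in> HS \<longleftrightarrow> 0 \<le> qRe x \<and> norm (qIm x) \<le> qRe x"
proof -
  have "0 \<le> qRe x \<Longrightarrow> (norm (qIm x))\<^sup>2 \<le> (qRe x)\<^sup>2 \<longleftrightarrow> norm (qIm x) \<le> qRe x"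
    by (metis norm_ge_zero power2_le_imp_le power_mono)
  then show ?thesis unfolding HS_def by auto
qed

lemma HS_add: "x \<in> HS \<Longrightarrow> y \<in> HS \<Longrightarrow> x + y \<in> HS"
  unfolding HS_iff using norm_triangle_ineq[of "qIm x" "qIm y"] by auto

lemma HS_scaleR: "x \<in> HS \<Longrightarrow> 0 \<le> a \<Longrightarrow> a *\<^sub>R x \<in> HS"
  unfolding HS_iff by (auto intro: mult_left_mono)

lemma Phi_scaleR_mu: "Phi w *\<^sub>R mu w = (1 / qRe w) *\<^sub>R qIm w"
  by (cases "qIm w = 0") (auto simp: Phi_def mu_def sgn_div_norm)

lemma Phi_eq_1_imp_mu: "Phi w = 1 \<Longrightarrow> mu w = (1 / qRe w) *\<^sub>R qIm w"
  using Phi_scaleR_mu[of w] by simp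

lemma parallel_if_same_polarization:
  assumes "qRe a > 0" "qRe b > 0" "Phi a = 1" "Phi b *\<^sub>R mu b = mu a"
  shows "b = (qRe b / qRe a) *\<^sub>R a"
proof -
  have polarization: "(1 / qRe b) *\<^sub>R qIm b = (1 / qRe a) *\<^sub>R qIm a"
    using assms(3,4) by (simp add: Phi_scaleR_mu Phi_eq_1_imp_mu)
  have "qIm b = qRe b *\<^sub>R ((1 / qRe b) *\<^sub>R qIm b)"
    using assms(2) by simp
  also have "\<dots> = qRe b *\<^sub>R ((1 / qRe a) *\<^sub>R qIm a)"
    by (simp only: polarization)
  finally have "qIm b = qRe b *\<^sub>R ((1 / qRe a) *\<^sub>R qIm a)" .
  then show ?thesis using assms(1) by (simp add: quat_eq_iff)
qed

lemma eventually_nonneg_diff_at_right: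
  fixes x y :: real
  assumes "0 \<le> x" "x = 0 \<Longrightarrow> y = 0"
  shows "\<forall>\<^sub>F e in at_right 0. 0 \<le> x - e * y"
proof (cases "x = 0")
  case False
  have "((\<lambda>e. x - e * y) \<longlongrightarrow> x - 0 * y) (at_right 0)"
    by (intro tendsto_intros)
  then have "\<forall>\<^sub>F e in at_right 0. 0 < x - e * y"
    using False assms(1) by (intro order_tendstoD(1)) auto
  then show ?thesis by eventually_elim simp
qed (use assms in simp)

lemma eventually_diff_in_HS_if_interior:
  assumes "norm (qIm a) < qRe a"
  shows "\<forall>\<^sub>F e in at_right 0. a - e *\<^sub>R b \<in> HS"
proof -
  have "((\<lambda>e. (qRe a - e * qRe b) - norm (qIm a - e *\<^sub>R qIm b))
          \<longlongrightarrow> (qRe a - 0 * qRe b) - norm (qIm a - 0 *\<^sub>R qIm b)) (at_right 0)"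
    by (intro tendsto_intros)
  then have "\<forall>\<^sub>F e in at_right 0. 0 < (qRe a - e * qRe b) - norm (qIm a - e *\<^sub>R qIm b)"
    using assms by (intro order_tendstoD(1)) auto
  then show ?thesis
  proof eventually_elim
    case (elim e)
    then show ?case
      unfolding HS_iff qRe_diff qIm_diff qRe_scaleR qIm_scaleR
      using norm_ge_zero[of "qIm a - e *\<^sub>R qIm b"] by linarith
  qed
qed

text \<open>The last hypothesis says that b is a positive multiple of a whenever a lies on the
boundary of H_S.\<close>

lemma eventually_diff_in_HS_at_right:
  assumes "a \<in> HS" "qRe a > 0" "qRe b > 0"
    and "Phi a = 1 \<Longrightarrow> Phi b *\<^sub>R mu b = mu a"
  shows "\<forall>\<^sub>F e in at_right 0. a - e *\<^sub>R b \<in> HS"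
proof (cases "Phi a = 1")
  case True
  define r where "r = qRe b / qRe a"
  have b: "b = r *\<^sub>R a"
    using parallel_if_same_polarization assms True by (simp add: r_def)
  have "\<forall>\<^sub>F e in at_right 0. 0 \<le> 1 - e * r"
    by (rule eventually_nonneg_diff_at_right) auto
  then show ?thesis
  proof eventually_elim
    case (elim e)
    have "a - e *\<^sub>R b = (1 - e * r) *\<^sub>R a"
      using b by (simp add: algebra_simps)
    then show ?case using elim assms(1) HS_scaleR by simp
  qed
next
  case False
  then have "norm (qIm a) < qRe a"
    using assms(1,2) by (auto simp: HS_iff Phi_def)
  then show ?thesis by (rule eventually_diff_in_HS_if_interior)
qed

lemma infinite_if_eventually_at_right:
  fixes x :: real
  assumes "\<forall>\<^sub>F y in at_right x. P y"
  shows "infinite {y. P y}"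
proof -
  obtain b where "x < b" "\<And>y. x < y \<Longrightarrow> y < b \<Longrightarrow> P y"
    using assms unfolding eventually_at_right_field by blast
  then have "{x<..<b} \<subseteq> {y. P y}" by auto
  then show ?thesis using \<open>x < b\<close> infinite_Ioo finite_subset by blast
qed

definition admissible_factors :: "('m \<Rightarrow> 'p \<Rightarrow> quat) \<Rightarrow> ('p \<Rightarrow> 'n \<Rightarrow> real) \<Rightarrow> bool" where
  "admissible_factors W H \<longleftrightarrow> (\<forall>m p. W m p \<in> HS) \<and> (\<forall>p n. 0 \<le> H p n)"

lemma essentially_unique_column:
  fixes W W' :: "'m \<Rightarrow> 'p::finite \<Rightarrow> quat" and H H' :: "'p \<Rightarrow> 'n \<Rightarrow> real"
  assumes "essentially_unique W H" "admissible_factors W' H'" "qmatmul W' H' = qmatmul W H"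
  shows "\<exists>k d. 0 < d \<and> (\<forall>m. W' m j = d *\<^sub>R W m k) \<and> (\<forall>n. H' j n = H k n / d)"
proof -
  obtain d \<tau> where "\<forall>p. 0 < d p" "\<forall>m j. W' m j = d (\<tau> j) *\<^sub>R W m (\<tau> j)"
    "\<forall>j n. H' j n = H (\<tau> j) n / d (\<tau> j)"
    using assms unfolding essentially_unique_def admissible_factors_def by blast
  then show ?thesis by blast
qed

text \<open>If row j of H vanished, column j of W could be replaced by any column in H_S, and these
do not all lie on the finitely many rays spanned by the columns of W.\<close>

lemma essentially_unique_row_nonzero:
  fixes W :: "'m \<Rightarrow> 'p::finite \<Rightarrow> quat"
  assumes unique: "essentially_unique W H" and adm: "admissible_factors W H"
  shows "\<exists>n. H j n \<noteq> 0"
proof (rule ccontr)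
  assume "\<nexists>n. H j n \<noteq> 0"
  then have zero: "H j n = 0" for n by simp
  fix m0 :: 'm
  define c :: "real \<Rightarrow> quat" where "c s = (1, s *\<^sub>R axis 1 1)" for s
  have "inj c"
    by (rule injI) (simp add: c_def)
  moreover have "c ` {0..1} \<subseteq> range (\<lambda>k. (1 / qRe (W m0 k)) *\<^sub>R W m0 k)"
  proof (rule image_subsetI)
    fix s :: real assume "s \<in> {0..1}"
    define W' where "W' = (\<lambda>m i. if i = j then c s else W m i)"
    have "c s \<in> HS"
      using \<open>s \<in> {0..1}\<close> by (simp add: HS_iff c_def qRe_def qIm_def)
    then have "admissible_factors W' H"
      using adm by (simp add: admissible_factors_def W'_def)
    moreover have "qmatmul W' H = qmatmul W H"
      unfolding qmatmul_def W'_def by (intro ext sum.cong) (auto simp: zero)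
    ultimately obtain k d where "c s = d *\<^sub>R W m0 k"
      using essentially_unique_column[OF unique, of W' H j] by (auto simp: W'_def)
    moreover from this have "1 = d * qRe (W m0 k)"
      by (metis c_def fst_conv qRe_def qRe_scaleR)
    then have "d = 1 / qRe (W m0 k)"
      by (metis mult_zero_right nonzero_eq_divide_eq zero_neq_one)
    ultimately show "c s \<in> range (\<lambda>k. (1 / qRe (W m0 k)) *\<^sub>R W m0 k)"
      by simp
  qed
  then have "finite (c ` {0..1})"
    by (rule finite_subset) simp
  then have "finite {0..1::real}"
    using \<open>inj c\<close> by (rule finite_imageD[OF _ inj_on_subset]) simp
  then show False using infinite_Icc[of "0::real" 1] by simp
qed

text \<open>W S and S^-1 H for the elementary matrix S = I + s E_ba.\<close>

definition shear_columns :: "('m \<Rightarrow> 'p \<Rightarrow> quat) \<Rightarrow> 'p \<Rightarrow> 'p \<Rightarrow> real \<Rightarrow> 'm \<Rightarrow> 'p \<Rightarrow> quat" where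
  "shear_columns W a b s = (\<lambda>m i. if i = a then W m a + s *\<^sub>R W m b else W m i)"

definition shear_rows :: "('p \<Rightarrow> 'n \<Rightarrow> real) \<Rightarrow> 'p \<Rightarrow> 'p \<Rightarrow> real \<Rightarrow> 'p \<Rightarrow> 'n \<Rightarrow> real" where
  "shear_rows H a b s = (\<lambda>i n. if i = b then H b n - s * H a n else H i n)"

lemma qmatmul_shear:
  fixes W :: "'m \<Rightarrow> 'p::finite \<Rightarrow> quat"
  assumes "a \<noteq> b"
  shows "qmatmul (shear_columns W a b s) (shear_rows H a b s) = qmatmul W H"
proof (intro ext)
  fix m n
  have split: "(\<Sum>i\<in>UNIV. f i) = f a + f b + (\<Sum>i\<in>UNIV - {a} - {b}. f i)"
    for f :: "'p \<Rightarrow> quat"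
    using assms by (simp add: sum.remove[of UNIV a] sum.remove[of "UNIV - {a}" b] add.assoc)
  have "(\<Sum>i\<in>UNIV - {a} - {b}. shear_rows H a b s i n *\<^sub>R shear_columns W a b s m i)
      = (\<Sum>i\<in>UNIV - {a} - {b}. H i n *\<^sub>R W m i)"
    by (intro sum.cong) (auto simp: shear_rows_def shear_columns_def)
  then show "qmatmul (shear_columns W a b s) (shear_rows H a b s) m n = qmatmul W H m n"
    unfolding qmatmul_def split[of "\<lambda>i. _ i n *\<^sub>R _ m i"]
    using assms by (simp add: shear_rows_def shear_columns_def algebra_simps)
qed

lemma admissible_shear_iff:
  assumes "admissible_factors W H"
  shows "admissible_factors (shear_columns W a b s) (shear_rows H a b s) \<longleftrightarrow>
    (\<forall>m. W m a + s *\<^sub>R W m b \<in> HS) \<and> (\<forall>n. 0 \<le> H b n - s * H a n)"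
  using assms unfolding admissible_factors_def shear_columns_def shear_rows_def by auto

text \<open>The sheared rank-one term H_a n (W_a + s W_b) determines s, but essential uniqueness
confines it to the finitely many rank-one terms of W H.\<close>

lemma finite_admissible_shears:
  fixes W :: "'m \<Rightarrow> 'p::finite \<Rightarrow> quat"
  assumes unique: "essentially_unique W H" and adm: "admissible_factors W H"
    and "a \<noteq> b" and Re: "qRe (W m0 b) \<noteq> 0"
  shows "finite {s. admissible_factors (shear_columns W a b s) (shear_rows H a b s)}"
    (is "finite ?S")
proof -
  define rank_one where "rank_one s = (\<lambda>m n. H a n *\<^sub>R (W m a + s *\<^sub>R W m b))" for s
  obtain n0 where n0: "H a n0 \<noteq> 0"
    using essentially_unique_row_nonzero[OF unique adm] by blast
  have "inj rank_one"
  proof (rule injI)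
    fix s t assume "rank_one s = rank_one t"
    then have "qRe (rank_one s m0 n0) = qRe (rank_one t m0 n0)" by simp
    then show "s = t" using n0 Re by (simp add: rank_one_def algebra_simps)
  qed
  moreover have "rank_one ` ?S \<subseteq> range (\<lambda>k m n. H k n *\<^sub>R W m k)"
  proof (rule image_subsetI)
    fix s assume "s \<in> ?S"
    then obtain k d where "0 < d" "\<forall>m. shear_columns W a b s m a = d *\<^sub>R W m k"
      "\<forall>n. shear_rows H a b s a n = H k n / d"
      using essentially_unique_column[OF unique _ qmatmul_shear[OF \<open>a \<noteq> b\<close>]] by blast
    then have "rank_one s = (\<lambda>m n. H k n *\<^sub>R W m k)"
      using \<open>a \<noteq> b\<close> by (auto simp: rank_one_def shear_columns_def shear_rows_def)
    then show "rank_one s \<in> range (\<lambda>k m n. H k n *\<^sub>R W m k)" by simp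
  qed
  then have "finite (rank_one ` ?S)"
    by (rule finite_subset) simp
  ultimately show ?thesis
    using finite_imageD inj_on_subset by blast
qed

lemma essentially_unique_polarization_witness:
  fixes W :: "'m::finite \<Rightarrow> 'p::finite \<Rightarrow> quat"
  assumes unique: "essentially_unique W H" and adm: "admissible_factors W H"
    and Re: "\<forall>m p. 0 < qRe (W m p)" and "p \<noteq> q"
  shows "\<exists>m. Phi (W m p) = 1 \<and> Phi (W m q) *\<^sub>R mu (W m q) \<noteq> mu (W m p)"
proof (rule ccontr)
  let ?S = "{s. admissible_factors (shear_columns W p q s) (shear_rows H p q s)}"
  note Re_nonzero = Re[rule_format, THEN less_imp_neq, THEN not_sym]
  assume "\<not> ?thesis"
  then have "\<forall>\<^sub>F e in at_right 0. W m p - e *\<^sub>R W m q \<in> HS" for m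
    using adm Re by (intro eventually_diff_in_HS_at_right) (auto simp: admissible_factors_def)
  then have "\<forall>\<^sub>F e in at_right 0. \<forall>m. W m p - e *\<^sub>R W m q \<in> HS"
    by (rule eventually_all_finite)
  moreover have "\<forall>\<^sub>F e in at_right 0. \<forall>n. 0 \<le> H q n + e * H p n"
    using eventually_at_right_less[of 0]
    by eventually_elim (use adm in \<open>auto simp: admissible_factors_def\<close>)
  ultimately have "\<forall>\<^sub>F e in at_right 0. e \<in> uminus -` ?S"
    by eventually_elim (fastforce simp: admissible_shear_iff[OF adm] add.commute)
  then have "infinite (uminus -` ?S)"
    using infinite_if_eventually_at_right by auto
  moreover have "finite (uminus -` ?S)"
    using finite_admissible_shears[OF unique adm \<open>p \<noteq> q\<close> Re_nonzero]
    by (intro finite_vimageI) (auto simp: inj_def)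
  ultimately show False by contradiction
qed

lemma essentially_unique_support_witness:
  fixes W :: "'m \<Rightarrow> 'p::finite \<Rightarrow> quat" and H :: "'p \<Rightarrow> 'n::finite \<Rightarrow> real"
  assumes unique: "essentially_unique W H" and adm: "admissible_factors W H"
    and Re: "\<forall>m p. 0 < qRe (W m p)" and "p \<noteq> q"
  shows "\<exists>n. H p n = 0 \<and> 0 < H q n"
proof (rule ccontr)
  let ?S = "{s. admissible_factors (shear_columns W q p s) (shear_rows H q p s)}"
  note Re_nonzero = Re[rule_format, THEN less_imp_neq, THEN not_sym]
  assume "\<not> ?thesis"
  then have "H p n = 0 \<Longrightarrow> H q n = 0" for n
    using adm by (force simp: admissible_factors_def less_eq_real_def)
  then have "\<forall>\<^sub>F e in at_right 0. 0 \<le> H p n - e * H q n" for n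
    using adm by (intro eventually_nonneg_diff_at_right) (auto simp: admissible_factors_def)
  then have "\<forall>\<^sub>F e in at_right 0. \<forall>n. 0 \<le> H p n - e * H q n"
    by (rule eventually_all_finite)
  moreover have "\<forall>\<^sub>F e in at_right 0. \<forall>m. W m q + e *\<^sub>R W m p \<in> HS"
    using eventually_at_right_less[of 0]
    by eventually_elim (use adm in \<open>auto simp: admissible_factors_def intro!: HS_add HS_scaleR\<close>)
  ultimately have "\<forall>\<^sub>F e in at_right 0. e \<in> ?S"
    by eventually_elim (simp add: admissible_shear_iff[OF adm])
  then have "infinite ?S"
    using infinite_if_eventually_at_right by auto
  moreover have "finite ?S"
    using finite_admissible_shears[OF unique adm \<open>p \<noteq> q\<close>[symmetric] Re_nonzero] .
  ultimately show False by contradiction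
qed

theorem proposition4:
  fixes W :: "'m::finite \<Rightarrow> 'p::finite \<Rightarrow> quat" and H :: "'p \<Rightarrow> 'n::finite \<Rightarrow> real"
  assumes "CARD('p) \<ge> 2"
    and "\<forall>m p. W m p \<in> HS"
    and "\<forall>p n. H p n \<ge> 0"
    and "\<forall>m p. qRe (W m p) > 0"
    and "essentially_unique W H"
  shows "(\<forall>p q. p \<noteq> q \<longrightarrow>
            (\<exists>m. Phi (W m p) = 1 \<and> Phi (W m q) *\<^sub>R mu (W m q) \<noteq> mu (W m p)))
       \<and> (\<forall>p q. p \<noteq> q \<longrightarrow> (\<exists>n. H p n = 0 \<and> H q n > 0))"
proof -
  have "admissible_factors W H"
    using assms(2,3) by (simp add: admissible_factors_def)
  then show ?thesis
    using essentially_unique_polarization_witness[OF assms(5) _ assms(4)]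
      essentially_unique_support_witness[OF assms(5) _ assms(4)] by blast
qed

end
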